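(* Let $q\ge 4$. If five distinct points of $\mathcal O_1$ are contained in a solid $\Sigma$ of $\mathrm{PG}(U_1)$, then they lie in a twisted cubic of $\mathcal O_1$ (i.e. in $\theta(L)$ for some $q$-order subline $L$ of $\mathrm{PG}(1,q^3)$), and this twisted cubic equals $\Sigma\cap\mathcal O_1$.
   Context: $q$ is a prime power. Let $U_1\subset\mathbb F_{q^3}^8$ be the set of vectors $(a,b^{q^2},b^{q},c,b,c^{q},c^{q^2},d)$ with $a,d\in\mathbb F_q$, $b,c\in\mathbb F_{q^3}$; it is an $8$-dimensional $\mathbb F_q$-vector space, so $\mathrm{PG}(U_1)\cong\mathrm{PG}(7,q)$. For $(a,b,c,d)\ne 0$ let $P(a,b,c,d)$ be the point of $\mathrm{PG}(U_1)$ spanned by this vector. Let $\mathcal O_1=\{P(1,t,t^{q^2+q},t^{q^2+q+1}) : t\in\mathbb F_{q^3}\}\cup\{P(0,0,0,1)\}$ (a set of $q^3+1$ points; note $P(1,t,t^{q^2+q},t^{q^2+q+1})$ is the vector $(1,t)\otimes(1,t^q)\otimes(1,t^{q^2})$). Let $\theta:\mathrm{PG}(1,q^3)\to\mathcal O_1$ be the bijection $\langle(1,t)\rangle\mapsto P(1,t,t^{q^2+q},t^{q^2+q+1})$, $\langle(0,1)\rangle\mapsto P(0,0,0,1)$. A $q$-order subline of $\mathrm{PG}(1,q^3)$ is the image of $\mathrm{PG}(1,q)=\{\langle(1,t)\rangle:t\in\mathbb F_q\}\cup\{\langle(0,1)\rangle\}$ under an element of $\mathrm{PGL}(2,q^3)$.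 For every $q$-order subline $L$, $\theta(L)$ is a twisted cubic of $\mathrm{PG}(U_1)$ spanning a solid (e.g. $\theta(\mathrm{PG}(1,q))=\{P(1,t,t^2,t^3):t\in\mathbb F_q\}\cup\{P(0,0,0,1)\}$); these are called the twisted cubics of $\mathcal O_1$. A solid is a $3$-dimensional projective subspace. *)

theory Defs
  imports "HOL-Computational_Algebra.Primes"
begin

text \<open>The field F_{q^3} is a finite field type 'a with CARD('a) = q^3; its subfield
F_q is the fixed field of x \<mapsto> x^q.\<close>

definition Fq :: "nat \<Rightarrow> ('a::field) set" where
  "Fq q = {x. x ^ q = x}"

definition U1vec :: "nat \<Rightarrow> 'a::field \<Rightarrow> 'a \<Rightarrow> 'a \<Rightarrow> 'a \<Rightarrow> (nat \<Rightarrow> 'a)" where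
  "U1vec q a b c d = (\<lambda>i. if i < 8 then
      [a, b ^ (q^2), b ^ q, c, b, c ^ q, c ^ (q^2), d] ! i else 0)"

definition U1 :: "nat \<Rightarrow> (nat \<Rightarrow> 'a::field) set" where
  "U1 q = {U1vec q a b c d | a b c d. a \<in> Fq q \<and> d \<in> Fq q}"

definition fq_span :: "nat \<Rightarrow> (nat \<Rightarrow> 'a::field) set \<Rightarrow> (nat \<Rightarrow> 'a) set" where
  "fq_span q S = {(\<lambda>i. \<Sum>v\<in>T. c v * v i) | T c. finite T \<and> T \<subseteq> S \<and> (\<forall>v\<in>T. c v \<in> Fq q)}"

definition fq_indep :: "nat \<Rightarrow> (nat \<Rightarrow> 'a::field) set \<Rightarrow> bool" where
  "fq_indep q S \<longleftrightarrow> finite S \<and> (\<forall>c. (\<forall>v\<in>S. c v \<in> Fq q) \<and> (\<forall>i. (\<Sum>v\<in>S. c v * v i) = 0)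
        \<longrightarrow> (\<forall>v\<in>S. c v = 0))"

text \<open>A solid of PG(U_1): a 4-dimensional F_q-subspace of U_1 (as a set of vectors).\<close>
definition is_solid :: "nat \<Rightarrow> (nat \<Rightarrow> 'a::field) set \<Rightarrow> bool" where
  "is_solid q \<Sigma> \<longleftrightarrow> (\<exists>S. S \<subseteq> U1 q \<and> card S = 4 \<and> fq_indep q S \<and> \<Sigma> = fq_span q S)"

text \<open>A point of PG(U_1) is a 1-dimensional F_q-subspace; P(a,b,c,d) is the span of the vector.\<close>
definition Ppt :: "nat \<Rightarrow> 'a::field \<Rightarrow> 'a \<Rightarrow> 'a \<Rightarrow> 'a \<Rightarrow> (nat \<Rightarrow> 'a) set" where
  "Ppt q a b c d = fq_span q {U1vec q a b c d}"

text \<open>theta applied to a representative (x,y) \<noteq> (0,0) of a point of PG(1,q^3).\<close>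
definition theta :: "nat \<Rightarrow> 'a::field \<times> 'a \<Rightarrow> (nat \<Rightarrow> 'a) set" where
  "theta q p = (let (x, y) = p in
     if x = 0 then Ppt q 0 0 0 1
     else (let t = y / x in Ppt q 1 t (t ^ (q^2 + q)) (t ^ (q^2 + q + 1))))"

definition O1 :: "nat \<Rightarrow> ((nat \<Rightarrow> 'a::field) set) set" where
  "O1 q = {Ppt q 1 t (t ^ (q^2 + q)) (t ^ (q^2 + q + 1)) | t. True} \<union> {Ppt q 0 0 0 1}"

text \<open>theta(L) for L the image of PG(1,q) under the element of PGL(2,q^3) given by the
invertible matrix ((alpha,beta),(gamma,delta)) acting on (x,y).\<close>
definition twisted_cubic_O1 :: "nat \<Rightarrow> ((nat \<Rightarrow> 'a::field) set) set \<Rightarrow> bool" where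
  "twisted_cubic_O1 q C \<longleftrightarrow> (\<exists>\<alpha> \<beta> \<gamma> \<delta>. \<alpha> * \<delta> - \<beta> * \<gamma> \<noteq> 0 \<and>
      C = {theta q (\<alpha> + \<beta> * t, \<gamma> + \<delta> * t) | t. t \<in> Fq q} \<union> {theta q (\<beta>, \<delta>)})"

end

theory Submission
  imports Defs "HOL-Number_Theory.Residues"
begin

text \<open>
  \<open>PGL(2, q\<^sup>3)\<close> acts on \<open>O\<^sub>1\<close> through the linear maps \<open>M \<otimes> M\<^sup>q \<otimes> M\<^sup>q\<^sup>2\<close> of \<open>U\<^sub>1\<close>, sharply
  3-transitively on the points and permuting the twisted cubics.  So we may assume that the five
  points are \<open>\<theta>(\<infinity>), \<theta>(0), \<theta>(1), \<theta>(s), \<theta>(u)\<close>.  The vectors of the first four are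
  \<open>F_q\<close>-independent, so by counting they span the solid.  Expressing the vector of \<open>\<theta>(u)\<close> in
  this basis (its coordinates \<open>u\<close> and \<open>u\<^sup>q\<^sup>+\<^sup>q\<^sup>2\<close>) makes \<open>s\<close> a root of a quadratic over \<open>F_q\<close>,
  so \<open>s \<in> F_q\<close>; then the solid meets \<open>O\<^sub>1\<close> exactly in \<open>\<theta>(PG(1, q))\<close>.
\<close>

section \<open>The Frobenius map of \<open>F_{q^3}\<close>\<close>

lemma finite_field_power_card_eq_self:
  fixes x :: "'a::{field,finite}"
  shows "x ^ card (UNIV :: 'a set) = x"
proof (cases "x = 0")
  case True
  then show ?thesis by (simp add: finite_UNIV_card_ge_0)
next
  case False
  let ?U = "UNIV - {0 :: 'a}"
  have "bij_betw ((*) x) ?U ?U"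
    using False by (intro bij_betwI[of _ _ _ "(*) (inverse x)"]) auto
  then have "(\<Prod>y\<in>?U. x * y) = (\<Prod>y\<in>?U. y)"
    by (rule prod.reindex_bij_betw)
  then have "x ^ card ?U * (\<Prod>y\<in>?U. y) = 1 * (\<Prod>y\<in>?U. y)"
    by (simp only: prod.distrib prod_constant mult_1_left)
  moreover have "(\<Prod>y\<in>?U. y) \<noteq> 0"
    by simp
  ultimately have "x ^ card ?U = 1"
    by (rule mult_right_cancel[THEN iffD1, rotated])
  moreover have "card (UNIV :: 'a set) = Suc (card ?U)"
    using card_Suc_Diff1[of UNIV "0 :: 'a"] by simp
  ultimately show ?thesis
    by (simp only: power_Suc mult_1_right)
qed

locale cubic_frobenius =
  fixes field_type :: "'a::{field,finite} itself" and q :: nat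
  assumes power_q_add: "\<And>x y :: 'a. (x + y) ^ q = x ^ q + y ^ q"
    and power_q_cube: "\<And>x :: 'a. x ^ (q ^ 3) = x"
    and q_gt_1: "q > 1"

lemma cubic_frobeniusI:
  assumes "\<exists>p k. prime p \<and> k > 0 \<and> q = p ^ k"
    and "card (UNIV :: 'a::{field,finite} set) = q ^ 3"
  shows "cubic_frobenius TYPE('a) q"
proof
  obtain p k where pk: "prime p" "k > 0" "q = p ^ k"
    using assms(1) by blast
  have char_prime: "prime CHAR('a)"
    by (simp add: prime_CHAR_semidom finite_imp_CHAR_pos)
  have "CHAR('a) dvd p ^ (k * 3)"
    using CHAR_dvd_CARD[where 'a = 'a] assms(2) pk(3) by (simp add: power_mult)
  then have "CHAR('a) = p"
    using char_prime pk(1) prime_dvd_power primes_dvd_imp_eq by blast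
  then show "(x + y) ^ q = x ^ q + y ^ q" for x y :: 'a
    using freshmans_dream' char_prime pk(3) by blast
  show "x ^ (q ^ 3) = x" for x :: 'a
    using finite_field_power_card_eq_self assms(2) by metis
  show "q > 1"
    using pk prime_gt_1_nat one_less_power by blast
qed

context cubic_frobenius
begin

abbreviation F_q :: "'a set" where
  "F_q \<equiv> Fq q"

definition frob :: "'a \<Rightarrow> 'a" where
  "frob x = x ^ q"

lemma frob_add [simp]: "frob (x + y) = frob x + frob y"
  by (simp add: frob_def power_q_add)

lemma frob_mult [simp]: "frob (x * y) = frob x * frob y"
  by (simp add: frob_def power_mult_distrib)

lemma frob_0 [simp]: "frob 0 = 0"
  using q_gt_1 by (simp add: frob_def)

lemma frob_1 [simp]: "frob 1 = 1"
  by (simp add: frob_def)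

lemma frob_uminus [simp]: "frob (- x) = - frob x"
  using frob_add[of x "- x"] by (simp add: eq_neg_iff_add_eq_0 add.commute)

lemma frob_diff [simp]: "frob (x - y) = frob x - frob y"
  using frob_add[of x "- y"] by simp

lemma frob_divide [simp]: "frob (x / y) = frob x / frob y"
  by (simp add: frob_def power_divide)

lemma frob_frob_frob [simp]: "frob (frob (frob x)) = x"
proof -
  have "frob (frob (frob x)) = x ^ (q ^ 3)"
    by (simp add: frob_def power3_eq_cube flip: power_mult)
  then show ?thesis
    using power_q_cube by simp
qed

lemma frob_eq_0_iff [simp]: "frob x = 0 \<longleftrightarrow> x = 0"
  using q_gt_1 by (simp add: frob_def)

lemma frob_sum: "frob (\<Sum>x\<in>T. f x) = (\<Sum>x\<in>T. frob (f x))"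
  by (induction T rule: infinite_finite_induct) auto

lemma power_q_eq: "x ^ q = frob x" and power_q2_eq: "x ^ (q\<^sup>2) = frob (frob x)"
  by (simp_all add: frob_def power2_eq_square power_mult)

lemma Fq_iff: "x \<in> F_q \<longleftrightarrow> frob x = x"
  by (simp add: Fq_def frob_def)

lemma Fq_0 [simp]: "0 \<in> F_q" and Fq_1 [simp]: "1 \<in> F_q"
  by (simp_all add: Fq_iff)

lemma Fq_add [simp]: "x \<in> F_q \<Longrightarrow> y \<in> F_q \<Longrightarrow> x + y \<in> F_q"
  and Fq_mult [simp]: "x \<in> F_q \<Longrightarrow> y \<in> F_q \<Longrightarrow> x * y \<in> F_q"
  and Fq_diff [simp]: "x \<in> F_q \<Longrightarrow> y \<in> F_q \<Longrightarrow> x - y \<in> F_q"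
  and Fq_divide [simp]: "x \<in> F_q \<Longrightarrow> y \<in> F_q \<Longrightarrow> x / y \<in> F_q"
  by (simp_all add: Fq_iff)

lemma Fq_sum: "(\<And>x. x \<in> T \<Longrightarrow> f x \<in> F_q) \<Longrightarrow> (\<Sum>x\<in>T. f x) \<in> F_q"
  by (simp add: Fq_iff frob_sum)

lemma norm_in_Fq [simp]: "x * frob x * frob (frob x) \<in> F_q"
  by (simp add: Fq_iff mult_ac)

end

section \<open>\<open>F_q\<close>-subspaces\<close>

definition fq_subspace :: "nat \<Rightarrow> (nat \<Rightarrow> 'a::field) set \<Rightarrow> bool" where
  "fq_subspace q V \<longleftrightarrow> fq_span q V \<subseteq> V"

lemma fq_span_mono: "S \<subseteq> S' \<Longrightarrow> fq_span q S \<subseteq> fq_span q S'"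
  unfolding fq_span_def by blast

lemma fq_span_subset_subspace: "fq_subspace q V \<Longrightarrow> S \<subseteq> V \<Longrightarrow> fq_span q S \<subseteq> V"
  unfolding fq_subspace_def using fq_span_mono by blast

lemma fq_span_superset: "v \<in> S \<Longrightarrow> v \<in> fq_span q S"
  unfolding fq_span_def Fq_def by (rule CollectI, rule exI[of _ "{v}"], rule exI[of _ "\<lambda>_. 1"]) simp

lemma fq_subspace_scale:
  assumes "fq_subspace q V" "v \<in> V" "c \<in> Fq q"
  shows "(\<lambda>i. c * v i) \<in> V"
proof -
  have "(\<lambda>i. \<Sum>w\<in>{v}. c * w i) \<in> fq_span q V"
    unfolding fq_span_def using assms(2,3)
    by (intro CollectI exI[of _ "{v}"] exI[of _ "\<lambda>_. c"]) simp
  then show ?thesis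
    using assms(1) unfolding fq_subspace_def by auto
qed

lemma fq_span_singleton_subset_iff: "fq_subspace q V \<Longrightarrow> fq_span q {v} \<subseteq> V \<longleftrightarrow> v \<in> V"
  using fq_span_subset_subspace fq_span_superset by blast

lemma fq_indep_four:
  fixes w1 w2 w3 w4 :: "nat \<Rightarrow> 'a::field"
  assumes "distinct [w1, w2, w3, w4]"
    and "\<And>a b c d. a \<in> Fq q \<Longrightarrow> b \<in> Fq q \<Longrightarrow> c \<in> Fq q \<Longrightarrow> d \<in> Fq q \<Longrightarrow>
        (\<forall>i. a * w1 i + b * w2 i + c * w3 i + d * w4 i = 0) \<Longrightarrow> a = 0 \<and> b = 0 \<and> c = 0 \<and> d = 0"
  shows "fq_indep q {w1, w2, w3, w4}"
  unfolding fq_indep_def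
proof (intro conjI allI impI)
  fix c :: "(nat \<Rightarrow> 'a) \<Rightarrow> 'a"
  assume "(\<forall>v\<in>{w1, w2, w3, w4}. c v \<in> Fq q) \<and> (\<forall>i. (\<Sum>v\<in>{w1, w2, w3, w4}. c v * v i) = 0)"
  then show "\<forall>v\<in>{w1, w2, w3, w4}. c v = 0"
    using assms(1) assms(2)[of "c w1" "c w2" "c w3" "c w4"] by (simp add: add.assoc)
qed simp

definition lin_vec :: "((nat \<Rightarrow> 'a::field) \<Rightarrow> nat \<Rightarrow> 'a) \<Rightarrow> bool" where
  "lin_vec P \<longleftrightarrow> (\<forall>(T :: (nat \<Rightarrow> 'a) set) c f.
      P (\<lambda>i. \<Sum>x\<in>T. c x * f x i) = (\<lambda>i. \<Sum>x\<in>T. c x * P (f x) i))"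

lemma lin_vec_sum:
  fixes P :: "(nat \<Rightarrow> 'a::field) \<Rightarrow> nat \<Rightarrow> 'a" and T :: "(nat \<Rightarrow> 'a) set"
  shows "lin_vec P \<Longrightarrow> P (\<lambda>i. \<Sum>x\<in>T. c x * f x i) = (\<lambda>i. \<Sum>x\<in>T. c x * P (f x) i)"
  unfolding lin_vec_def by simp

lemma lin_vec_smult: "lin_vec P \<Longrightarrow> P (\<lambda>i. l * w i) = (\<lambda>i. l * P w i)"
  using lin_vec_sum[where T = "{w}" and c = "\<lambda>_. l" and f = "\<lambda>x. x"] by simp

lemma lin_vec_comp: "lin_vec P1 \<Longrightarrow> lin_vec P2 \<Longrightarrow> lin_vec (P1 \<circ> P2)"
  unfolding lin_vec_def by simp

lemma fq_subspace_image:
  assumes P: "lin_vec P" "inj P" and V: "fq_subspace q V"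
  shows "fq_subspace q (P ` V)"
  unfolding fq_subspace_def
proof
  fix w assume "w \<in> fq_span q (P ` V)"
  then obtain T c where w: "w = (\<lambda>i. \<Sum>v\<in>T. c v * v i)" "finite T" "T \<subseteq> P ` V" "\<forall>v\<in>T. c v \<in> Fq q"
    unfolding fq_span_def by blast
  then obtain T0 where T0: "T0 \<subseteq> V" "finite T0" "T = P ` T0"
    by (meson finite_subset_image)
  have "w = (\<lambda>i. \<Sum>v\<in>T0. c (P v) * P v i)"
    unfolding w(1) T0(3) using inj_on_subset[OF P(2)] by (simp add: sum.reindex)
  also have "\<dots> = P (\<lambda>i. \<Sum>v\<in>T0. c (P v) * v i)"
    using lin_vec_sum[OF P(1), where T = T0 and c = "c \<circ> P" and f = "\<lambda>v. v"] by simp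
  also have "(\<lambda>i. \<Sum>v\<in>T0. c (P v) * v i) \<in> fq_span q V"
    unfolding fq_span_def using T0 w(4) by (intro CollectI exI[of _ T0] exI[of _ "c \<circ> P"]) auto
  then have "(\<lambda>i. \<Sum>v\<in>T0. c (P v) * v i) \<in> V"
    using V unfolding fq_subspace_def by blast
  then have "P (\<lambda>i. \<Sum>v\<in>T0. c (P v) * v i) \<in> P ` V"
    by (rule imageI)
  finally show "w \<in> P ` V" .
qed

context cubic_frobenius
begin

lemma fq_span_finite_iff:
  fixes S :: "(nat \<Rightarrow> 'a) set"
  assumes "finite S"
  shows "w \<in> fq_span q S \<longleftrightarrow> (\<exists>c. (\<forall>v\<in>S. c v \<in> F_q) \<and> w = (\<lambda>i. \<Sum>v\<in>S. c v * v i))"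
proof
  assume "w \<in> fq_span q S"
  then obtain T c where w: "w = (\<lambda>i. \<Sum>v\<in>T. c v * v i)" "T \<subseteq> S" "\<forall>v\<in>T. c v \<in> F_q"
    unfolding fq_span_def by blast
  define c' where "c' v = (if v \<in> T then c v else 0)" for v
  have "(\<Sum>v\<in>S. c' v * v i) = (\<Sum>v\<in>S. if v \<in> T then c v * v i else 0)" for i
    by (rule sum.cong) (simp_all add: c'_def)
  then have "(\<Sum>v\<in>S. c' v * v i) = (\<Sum>v\<in>S \<inter> T. c v * v i)" for i
    using assms by (simp add: sum.inter_restrict)
  moreover have "S \<inter> T = T"
    using w(2) by blast
  moreover have "\<forall>v\<in>S. c' v \<in> F_q"
    using w(3) by (simp add: c'_def)
  ultimately show "\<exists>c. (\<forall>v\<in>S. c v \<in> F_q) \<and> w = (\<lambda>i. \<Sum>v\<in>S. c v * v i)"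
    using w(1) by (intro exI[of _ c'] conjI ext) simp_all
next
  assume "\<exists>c. (\<forall>v\<in>S. c v \<in> F_q) \<and> w = (\<lambda>i. \<Sum>v\<in>S. c v * v i)"
  then show "w \<in> fq_span q S"
    using assms unfolding fq_span_def by blast
qed

lemma fq_span_finite_eq_image:
  fixes S :: "(nat \<Rightarrow> 'a) set"
  assumes "finite S"
  shows "fq_span q S = (\<lambda>c i. \<Sum>v\<in>S. c v * v i) ` (S \<rightarrow>\<^sub>E F_q)"
proof (intro equalityI subsetI)
  fix w assume "w \<in> fq_span q S"
  then obtain c where c: "\<forall>v\<in>S. c v \<in> F_q" "w = (\<lambda>i. \<Sum>v\<in>S. c v * v i)"
    using fq_span_finite_iff[OF assms] by blast
  then have "w = (\<lambda>i. \<Sum>v\<in>S. restrict c S v * v i)"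
    by simp
  moreover have "restrict c S \<in> S \<rightarrow>\<^sub>E F_q"
    using c(1) by simp
  ultimately show "w \<in> (\<lambda>c i. \<Sum>v\<in>S. c v * v i) ` (S \<rightarrow>\<^sub>E F_q)"
    by blast
next
  fix w assume "w \<in> (\<lambda>c i. \<Sum>v\<in>S. c v * v i) ` (S \<rightarrow>\<^sub>E F_q)"
  then show "w \<in> fq_span q S"
    using fq_span_finite_iff[OF assms] by (auto simp: PiE_iff)
qed

lemma fq_subspace_fq_span:
  fixes S :: "(nat \<Rightarrow> 'a) set"
  assumes "finite S"
  shows "fq_subspace q (fq_span q S)"
  unfolding fq_subspace_def
proof
  fix w assume "w \<in> fq_span q (fq_span q S)"
  then obtain T d where w: "w = (\<lambda>i. \<Sum>u\<in>T. d u * u i)" "finite T" "T \<subseteq> fq_span q S"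
      "\<forall>u\<in>T. d u \<in> F_q"
    unfolding fq_span_def by blast
  have "\<forall>u\<in>T. \<exists>c. (\<forall>v\<in>S. c v \<in> F_q) \<and> u = (\<lambda>i. \<Sum>v\<in>S. c v * v i)"
    using w(3) fq_span_finite_iff[OF assms] by blast
  then obtain C where C: "\<And>u. u \<in> T \<Longrightarrow> (\<forall>v\<in>S. C u v \<in> F_q) \<and> u = (\<lambda>i. \<Sum>v\<in>S. C u v * v i)"
    by (metis bchoice)
  have C_coord: "u i = (\<Sum>v\<in>S. C u v * v i)" if "u \<in> T" for u i
    using fun_cong[OF conjunct2[OF C[OF that]], of i] by simp
  have "(\<Sum>u\<in>T. d u * u i) = (\<Sum>v\<in>S. (\<Sum>u\<in>T. d u * C u v) * v i)" for i
  proof -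
    have "(\<Sum>u\<in>T. d u * u i) = (\<Sum>u\<in>T. d u * (\<Sum>v\<in>S. C u v * v i))"
      by (rule sum.cong[OF refl]) (simp only: C_coord[symmetric])
    also have "\<dots> = (\<Sum>u\<in>T. \<Sum>v\<in>S. d u * C u v * v i)"
      by (simp add: sum_distrib_left mult.assoc)
    also have "\<dots> = (\<Sum>v\<in>S. (\<Sum>u\<in>T. d u * C u v) * v i)"
      by (subst sum.swap) (simp add: sum_distrib_right)
    finally show ?thesis .
  qed
  moreover have "\<forall>v\<in>S. (\<Sum>u\<in>T. d u * C u v) \<in> F_q"
    using w(4) C by (auto intro!: Fq_sum)
  ultimately show "w \<in> fq_span q S"
    unfolding fq_span_finite_iff[OF assms] w(1)
    by (intro exI[of _ "\<lambda>v. \<Sum>u\<in>T. d u * C u v"] conjI ext) simp_all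
qed

lemma card_fq_span_le:
  fixes S :: "(nat \<Rightarrow> 'a) set"
  assumes "finite S"
  shows "finite (fq_span q S)" "card (fq_span q S) \<le> card F_q ^ card S"
proof -
  have "finite (S \<rightarrow>\<^sub>E F_q)"
    using assms by (simp add: finite_PiE)
  then show "finite (fq_span q S)"
    by (simp add: fq_span_finite_eq_image[OF assms])
  have "card (fq_span q S) \<le> card (S \<rightarrow>\<^sub>E F_q)"
    unfolding fq_span_finite_eq_image[OF assms] using \<open>finite (S \<rightarrow>\<^sub>E F_q)\<close> by (rule card_image_le)
  then show "card (fq_span q S) \<le> card F_q ^ card S"
    using assms by (simp add: card_PiE)
qed

lemma card_fq_span_indep:
  fixes S :: "(nat \<Rightarrow> 'a) set"
  assumes "fq_indep q S"
  shows "card (fq_span q S) = card F_q ^ card S"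
proof -
  have fin: "finite S"
    using assms unfolding fq_indep_def by blast
  have "inj_on (\<lambda>c i. \<Sum>v\<in>S. c v * v i) (S \<rightarrow>\<^sub>E F_q)"
  proof (rule inj_onI)
    fix c d assume c: "c \<in> S \<rightarrow>\<^sub>E F_q" and d: "d \<in> S \<rightarrow>\<^sub>E F_q"
      and eq: "(\<lambda>i. \<Sum>v\<in>S. c v * v i) = (\<lambda>i. \<Sum>v\<in>S. d v * v i)"
    have "(\<Sum>v\<in>S. (c v - d v) * v i) = 0" for i
      using fun_cong[OF eq, of i] by (simp add: left_diff_distrib sum_subtractf)
    moreover have "\<forall>v\<in>S. c v - d v \<in> F_q"
      using c d by (auto simp: PiE_iff)
    ultimately have "\<forall>v\<in>S. c v - d v = 0"
      using assms unfolding fq_indep_def by (blast dest: spec[of _ "\<lambda>v. c v - d v"])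
    then show "c = d"
      using c d by (auto intro: PiE_ext)
  qed
  then have "card (fq_span q S) = card (S \<rightarrow>\<^sub>E F_q)"
    by (simp add: fq_span_finite_eq_image[OF fin] card_image)
  then show ?thesis
    using fin by (simp add: card_PiE)
qed

lemma fq_span_four:
  fixes w1 w2 w3 w4 :: "nat \<Rightarrow> 'a"
  assumes "distinct [w1, w2, w3, w4]"
  shows "w \<in> fq_span q {w1, w2, w3, w4} \<longleftrightarrow> (\<exists>a\<in>F_q. \<exists>b\<in>F_q. \<exists>c\<in>F_q. \<exists>d\<in>F_q.
           w = (\<lambda>i. a * w1 i + b * w2 i + c * w3 i + d * w4 i))"
proof -
  have sum4: "(\<Sum>v\<in>{w1, w2, w3, w4}. f v) = f w1 + f w2 + f w3 + f w4" for f :: "_ \<Rightarrow> 'a"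
    using assms by (simp add: add.assoc)
  show ?thesis
  proof
    assume "w \<in> fq_span q {w1, w2, w3, w4}"
    then obtain c where "\<forall>v\<in>{w1, w2, w3, w4}. c v \<in> F_q" "w = (\<lambda>i. \<Sum>v\<in>{w1, w2, w3, w4}. c v * v i)"
      using fq_span_finite_iff[of "{w1, w2, w3, w4}"] by blast
    then show "\<exists>a\<in>F_q. \<exists>b\<in>F_q. \<exists>c\<in>F_q. \<exists>d\<in>F_q. w = (\<lambda>i. a * w1 i + b * w2 i + c * w3 i + d * w4 i)"
      unfolding sum4 by blast
  next
    assume "\<exists>a\<in>F_q. \<exists>b\<in>F_q. \<exists>c\<in>F_q. \<exists>d\<in>F_q. w = (\<lambda>i. a * w1 i + b * w2 i + c * w3 i + d * w4 i)"
    then obtain a b c d where abcd: "a \<in> F_q" "b \<in> F_q" "c \<in> F_q" "d \<in> F_q"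
      and w: "w = (\<lambda>i. a * w1 i + b * w2 i + c * w3 i + d * w4 i)"
      by blast
    define k where "k v = (if v = w1 then a else if v = w2 then b else if v = w3 then c else d)" for v
    have "w = (\<lambda>i. \<Sum>v\<in>{w1, w2, w3, w4}. k v * v i)"
      unfolding sum4 w using assms by (auto simp: k_def)
    moreover have "\<forall>v\<in>{w1, w2, w3, w4}. k v \<in> F_q"
      using abcd by (simp add: k_def)
    ultimately show "w \<in> fq_span q {w1, w2, w3, w4}"
      using fq_span_finite_iff[of "{w1, w2, w3, w4}"] by blast
  qed
qed

end

section \<open>Moebius transformations of \<open>PG(1, q^3)\<close>\<close>

type_synonym 'b mat2 = "'b \<times> 'b \<times> 'b \<times> 'b"

definition mat_act :: "'b::field mat2 \<Rightarrow> 'b \<times> 'b \<Rightarrow> 'b \<times> 'b" where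
  "mat_act M p = (case M of (a, b, c, d) \<Rightarrow> case p of (x, y) \<Rightarrow> (a * x + b * y, c * x + d * y))"

definition mat_det :: "'b::field mat2 \<Rightarrow> 'b" where
  "mat_det M = (case M of (a, b, c, d) \<Rightarrow> a * d - b * c)"

definition mat_mult :: "'b::field mat2 \<Rightarrow> 'b mat2 \<Rightarrow> 'b mat2" where
  "mat_mult M N = (case M of (a, b, c, d) \<Rightarrow> case N of (e, f, g, h) \<Rightarrow>
     (a * e + b * g, a * f + b * h, c * e + d * g, c * f + d * h))"

definition mat_adj :: "'b::field mat2 \<Rightarrow> 'b mat2" where
  "mat_adj M = (case M of (a, b, c, d) \<Rightarrow> (d, - b, - c, a))"

text \<open>A point of \<open>PG(1, q\<^sup>3)\<close> is \<open>None\<close> for \<open>\<langle>(0,1)\<rangle>\<close> and \<open>Some t\<close> for \<open>\<langle>(1,t)\<rangle>\<close>.\<close>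

definition proj_point :: "'b::field \<times> 'b \<Rightarrow> 'b option" where
  "proj_point p = (case p of (x, y) \<Rightarrow> if x = 0 then None else Some (y / x))"

definition proj_rep :: "'b::field option \<Rightarrow> 'b \<times> 'b" where
  "proj_rep x = (case x of None \<Rightarrow> (0, 1) | Some t \<Rightarrow> (1, t))"

definition mobius :: "'b::field mat2 \<Rightarrow> 'b option \<Rightarrow> 'b option" where
  "mobius M x = proj_point (mat_act M (proj_rep x))"

lemma mat_act_mult: "mat_act (mat_mult M N) p = mat_act M (mat_act N p)"
  by (cases M; cases N; cases p) (simp add: mat_act_def mat_mult_def algebra_simps)

lemma mat_act_scale: "mat_act M (l * x, l * y) = (l * fst (mat_act M (x, y)), l * snd (mat_act M (x, y)))"
  by (cases M) (simp add: mat_act_def algebra_simps)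

lemma proj_point_scale: "l \<noteq> 0 \<Longrightarrow> proj_point (l * x, l * y) = proj_point (x, y)"
  by (simp add: proj_point_def)

lemma proj_point_rep [simp]: "proj_point (proj_rep x) = x"
  by (cases x) (simp_all add: proj_rep_def proj_point_def)

lemma mat_act_nonzero:
  assumes "mat_det M \<noteq> 0" "p \<noteq> (0, 0)"
  shows "mat_act M p \<noteq> (0, 0)"
proof (cases M; cases p)
  fix a b c d x y assume M: "M = (a, b, c, d)" and p: "p = (x, y)"
  show ?thesis
  proof
    assume "mat_act M p = (0, 0)"
    then have e: "a * x + b * y = 0" "c * x + d * y = 0"
      using M p by (simp_all add: mat_act_def)
    have "(a * d - b * c) * x = d * (a * x + b * y) - b * (c * x + d * y)"
      "(a * d - b * c) * y = a * (c * x + d * y) - c * (a * x + b * y)"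
      by (simp_all add: algebra_simps)
    then show False
      using assms e M p by (simp add: mat_det_def)
  qed
qed

lemma proj_rep_proj_point:
  assumes "p \<noteq> (0, 0)"
  shows "\<exists>l. l \<noteq> 0 \<and> proj_rep (proj_point p) = (l * fst p, l * snd p)"
proof (cases p)
  case (Pair x y)
  show ?thesis
  proof (cases "x = 0")
    case True
    then show ?thesis
      using assms Pair by (intro exI[of _ "1 / y"]) (simp add: proj_rep_def proj_point_def)
  next
    case False
    then show ?thesis
      using Pair by (intro exI[of _ "1 / x"]) (simp add: proj_rep_def proj_point_def)
  qed
qed

lemma mobius_mult: "mat_det N \<noteq> 0 \<Longrightarrow> mobius (mat_mult M N) x = mobius M (mobius N x)"
proof -
  assume "mat_det N \<noteq> 0"
  then have "mat_act N (proj_rep x) \<noteq> (0, 0)"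
    by (rule mat_act_nonzero) (cases x, simp_all add: proj_rep_def)
  then obtain l where "l \<noteq> 0"
    and l: "proj_rep (mobius N x) = (l * fst (mat_act N (proj_rep x)), l * snd (mat_act N (proj_rep x)))"
    unfolding mobius_def by (blast dest: proj_rep_proj_point)
  then show ?thesis
    by (simp add: mobius_def l mat_act_scale proj_point_scale mat_act_mult)
qed

lemma mat_det_mult: "mat_det (mat_mult M N) = mat_det M * mat_det N"
  by (cases M; cases N) (simp add: mat_det_def mat_mult_def algebra_simps)

lemma mat_det_adj [simp]: "mat_det (mat_adj M) = mat_det M"
  by (cases M) (simp add: mat_det_def mat_adj_def algebra_simps)

lemma mobius_adj_mobius [simp]:
  assumes "mat_det M \<noteq> 0"
  shows "mobius (mat_adj M) (mobius M x) = x"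
proof -
  have "mobius (mat_adj M) (mobius M x) = mobius (mat_mult (mat_adj M) M) x"
    using assms by (simp add: mobius_mult)
  also have "\<dots> = proj_point (mat_det M * fst (proj_rep x), mat_det M * snd (proj_rep x))"
    by (cases M; cases "proj_rep x")
      (simp add: mobius_def mat_act_def mat_mult_def mat_adj_def mat_det_def algebra_simps)
  also have "\<dots> = x"
    using assms by (simp add: proj_point_scale)
  finally show ?thesis .
qed

lemma mat_adj_adj [simp]: "mat_adj (mat_adj M) = M"
  by (cases M) (simp add: mat_adj_def)

lemma mobius_mobius_adj [simp]: "mat_det M \<noteq> 0 \<Longrightarrow> mobius M (mobius (mat_adj M) x) = x"
  using mobius_adj_mobius[of "mat_adj M" x] by simp

lemma mobius_eq_iff: "mat_det M \<noteq> 0 \<Longrightarrow> mobius M x = mobius M y \<longleftrightarrow> x = y"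
  by (metis mobius_adj_mobius)

definition inv_mat :: "'b::field mat2" where
  "inv_mat = (0, 1, 1, 0)"

definition shift_mat :: "'b::field \<Rightarrow> 'b mat2" where
  "shift_mat e = (1, 0, e, 1)"

definition scale_mat :: "'b::field \<Rightarrow> 'b mat2" where
  "scale_mat r = (1, 0, 0, r)"

lemma mobius_inv_mat: "mobius inv_mat None = Some 0"
    "mobius inv_mat (Some t) = (if t = 0 then None else Some (1 / t))"
  by (simp_all add: mobius_def inv_mat_def mat_act_def proj_rep_def proj_point_def)

lemma mobius_shift_mat: "mobius (shift_mat e) None = None" "mobius (shift_mat e) (Some t) = Some (e + t)"
  by (simp_all add: mobius_def shift_mat_def mat_act_def proj_rep_def proj_point_def)

lemma mobius_scale_mat: "r \<noteq> 0 \<Longrightarrow> mobius (scale_mat r) None = None"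
    "mobius (scale_mat r) (Some t) = Some (r * t)"
  by (simp_all add: mobius_def scale_mat_def mat_act_def proj_rep_def proj_point_def)

lemma mat_det_generators: "mat_det (inv_mat :: 'b::field mat2) \<noteq> 0" "mat_det (shift_mat e) \<noteq> 0"
    "r \<noteq> 0 \<Longrightarrow> mat_det (scale_mat r) \<noteq> 0"
  by (simp_all add: mat_det_def inv_mat_def shift_mat_def scale_mat_def)

section \<open>The points of \<open>O\<^sub>1\<close>\<close>

text \<open>Coordinates from 8 on are kept, so that the lifts below are injective on all of \<open>nat \<Rightarrow> 'a\<close>.\<close>

definition patch8 :: "'a list \<Rightarrow> (nat \<Rightarrow> 'a) \<Rightarrow> nat \<Rightarrow> 'a" where
  "patch8 xs w i = (if i < 8 then xs ! i else w i)"

lemma less_8_cases: "i < (8::nat) \<longleftrightarrow> i \<in> {0, 1, 2, 3, 4, 5, 6, 7}"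
  by auto

definition base_subline :: "nat \<Rightarrow> 'a::field option set" where
  "base_subline q = insert None (Some ` Fq q)"

context cubic_frobenius
begin

definition cubic_vec :: "'a option \<Rightarrow> nat \<Rightarrow> 'a" where
  "cubic_vec x = (case x of
      None \<Rightarrow> U1vec q 0 0 0 1
    | Some t \<Rightarrow> U1vec q 1 t (t ^ (q\<^sup>2 + q)) (t ^ (q\<^sup>2 + q + 1)))"

definition cubic_point :: "'a option \<Rightarrow> (nat \<Rightarrow> 'a) set" where
  "cubic_point x = fq_span q {cubic_vec x}"

lemma U1vec_eq_patch8:
  "U1vec q a b c d = patch8 [a, frob (frob b), frob b, c, b, frob c, frob (frob c), d] (\<lambda>_. 0)"
  by (simp add: U1vec_def patch8_def power_q_eq power_q2_eq fun_eq_iff)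

lemma cubic_vec_None: "cubic_vec None = patch8 [0, 0, 0, 0, 0, 0, 0, 1] (\<lambda>_. 0)"
  by (simp add: cubic_vec_def U1vec_eq_patch8)

lemma cubic_vec_Some: "cubic_vec (Some t) = patch8 [1, frob (frob t), frob t, frob t * frob (frob t),
    t, t * frob (frob t), t * frob t, t * frob t * frob (frob t)] (\<lambda>_. 0)"
  by (simp add: cubic_vec_def U1vec_eq_patch8 power_add power_q_eq power_q2_eq mult_ac)

lemma cubic_vec_coords:
  "cubic_vec None 0 = 0" "cubic_vec None 3 = 0" "cubic_vec None 4 = 0" "cubic_vec None 7 = 1"
  "cubic_vec (Some t) 0 = 1" "cubic_vec (Some t) 3 = frob t * frob (frob t)"
  "cubic_vec (Some t) 4 = t" "cubic_vec (Some t) 7 = t * frob t * frob (frob t)"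
  by (simp_all add: cubic_vec_None cubic_vec_Some patch8_def)

lemma cubic_vec_eq_iff: "cubic_vec x = cubic_vec y \<longleftrightarrow> x = y"
proof
  assume eq: "cubic_vec x = cubic_vec y"
  show "x = y"
    using fun_cong[OF eq, of 0] fun_cong[OF eq, of 4]
    by (cases x; cases y) (simp_all add: cubic_vec_coords)
qed simp

lemma cubic_point_subset_iff: "fq_subspace q V \<Longrightarrow> cubic_point x \<subseteq> V \<longleftrightarrow> cubic_vec x \<in> V"
  unfolding cubic_point_def by (rule fq_span_singleton_subset_iff)

lemma O1_eq_range_cubic_point: "O1 q = range cubic_point"
proof -
  have "range cubic_point = insert (cubic_point None) (range (\<lambda>t. cubic_point (Some t)))"
    by (simp add: UNIV_option_conv image_image)
  then show ?thesis
    by (auto simp: O1_def cubic_point_def cubic_vec_def Ppt_def)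
qed

lemma theta_eq_cubic_point: "theta q p = cubic_point (proj_point p)"
  by (cases p) (simp add: theta_def proj_point_def cubic_point_def cubic_vec_def Ppt_def Let_def)

lemma inj_cubic_point: "inj cubic_point"
proof
  fix x y assume "cubic_point x = cubic_point y"
  then have "cubic_vec x \<in> fq_span q {cubic_vec y}"
    using fq_span_superset[of "cubic_vec x" "{cubic_vec x}" q] by (simp add: cubic_point_def)
  then obtain c where "cubic_vec x = (\<lambda>i. c * cubic_vec y i)"
    by (auto simp: fq_span_finite_iff)
  then have c: "cubic_vec x i = c * cubic_vec y i" for i
    by simp
  show "x = y"
  proof (cases x; cases y)
    fix t s assume "x = Some t" "y = Some s"
    then show "x = y"
      using c[of 0] c[of 4] by (simp add: cubic_vec_coords)
  qed (use c[of 0] c[of 7] in \<open>auto simp: cubic_vec_coords\<close>)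
qed

end

section \<open>A normalised frame\<close>

context cubic_frobenius
begin

text \<open>A root of a quadratic over \<open>F_q\<close> lies in \<open>F_{q^2} \<inter> F_{q^3} = F_q\<close>.\<close>

lemma Fq_if_quadratic_root:
  assumes root: "s * s + a1 * s + a0 = 0" and coeffs: "a1 \<in> F_q" "a0 \<in> F_q"
  shows "s \<in> F_q"
proof (rule ccontr)
  assume s: "s \<notin> F_q"
  have "frob s * frob s + a1 * frob s + a0 = 0"
    using arg_cong[OF root, of frob] coeffs by (simp add: Fq_iff)
  moreover have "(frob s - s) * (frob s + s + a1)
      = (frob s * frob s + a1 * frob s + a0) - (s * s + a1 * s + a0)"
    by (simp add: algebra_simps)
  ultimately have "(frob s - s) * (frob s + s + a1) = 0"
    using root by simp
  then have "frob s + s + a1 = 0"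
    using s by (simp add: Fq_iff)
  moreover have "frob s = (frob s + s + a1) - s - a1"
    by (simp add: algebra_simps)
  ultimately have "frob s = - s - a1"
    by simp
  then have "frob (frob s) = s"
    using coeffs by (simp add: Fq_iff)
  then have "frob s = s"
    using frob_frob_frob[of s] by simp
  then show False
    using s by (simp add: Fq_iff)
qed

text \<open>Multiplied by \<open>s\<close>, the relation becomes a quadratic equation for \<open>s\<close> whose coefficients
  are symmetric in \<open>s, s\<^sup>q, s\<^sup>q\<^sup>2\<close>.\<close>

lemma Fq_if_norm_relation:
  assumes cd: "c \<in> F_q" "d \<in> F_q" "c \<noteq> 0" "d \<noteq> 0"
    and E: "(c + d * frob s) * (c + d * frob (frob s)) = c + d * (frob s * frob (frob s))"
  shows "s \<in> F_q"
proof -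
  define \<sigma> where "\<sigma> = s + frob s + frob (frob s)"
  define n where "n = s * frob s * frob (frob s)"
  define a1 where "a1 = - (c * c + c * d * \<sigma> - c) / (c * d)"
  define a0 where "a0 = - (d * d - d) * n / (c * d)"
  have "\<sigma> \<in> F_q" "n \<in> F_q"
    unfolding \<sigma>_def n_def Fq_iff by (simp_all add: algebra_simps)
  have "c * d * (s * s) - ((c * c + c * d * \<sigma> - c) * s + (d * d - d) * n)
      = s * ((c + d * (frob s * frob (frob s))) - (c + d * frob s) * (c + d * frob (frob s)))"
    unfolding \<sigma>_def n_def by (simp add: algebra_simps)
  then have "c * d * (s * s) = (c * c + c * d * \<sigma> - c) * s + (d * d - d) * n"
    using E by simp
  moreover have "s * s + a1 * s + a0
      = (c * d * (s * s) - ((c * c + c * d * \<sigma> - c) * s + (d * d - d) * n)) / (c * d)"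
    unfolding a1_def a0_def using cd by (simp add: field_simps)
  ultimately have "s * s + a1 * s + a0 = 0"
    by simp
  then show ?thesis
    by (rule Fq_if_quadratic_root) (use cd \<open>\<sigma> \<in> F_q\<close> \<open>n \<in> F_q\<close> in \<open>simp_all add: a1_def a0_def\<close>)
qed

lemma frame_fifth_point_Fq:
  assumes cd: "c \<in> F_q" "d \<in> F_q" and u: "u = c + d * s"
    and norm_rel: "frob u * frob (frob u) = c + d * (frob s * frob (frob s))"
    and ne: "s \<noteq> 0" "u \<noteq> 0" "u \<noteq> 1" "u \<noteq> s"
  shows "s \<in> F_q"
proof -
  have "frob c = c" "frob d = d"
    using cd by (simp_all add: Fq_iff)
  then have E: "(c + d * frob s) * (c + d * frob (frob s)) = c + d * (frob s * frob (frob s))"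
    using norm_rel u by simp
  consider "d = 0" | "c = 0" | "c \<noteq> 0" "d \<noteq> 0"
    by blast
  then show ?thesis
  proof cases
    case 1
    then have "c * c = c"
      using E by simp
    then have "c = 0 \<or> c = 1"
      by (metis mult_cancel_right1 mult_eq_0_iff)
    then show ?thesis
      using u ne 1 by auto
  next
    case 2
    then have "(d * d) * (frob s * frob (frob s)) = d * (frob s * frob (frob s))"
      using E by (simp add: algebra_simps)
    then have "d * d = d"
      using ne by simp
    then have "d = 0 \<or> d = 1"
      by (metis mult_cancel_right1 mult_eq_0_iff)
    then show ?thesis
      using u ne 2 by auto
  next
    case 3
    then show ?thesis
      using Fq_if_norm_relation cd E by blast
  qed
qed

definition frame :: "'a \<Rightarrow> (nat \<Rightarrow> 'a) set" where
  "frame s = {cubic_vec None, cubic_vec (Some 0), cubic_vec (Some 1), cubic_vec (Some s)}"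

lemma frame_distinct:
  assumes "s \<noteq> 0" "s \<noteq> 1"
  shows "distinct [cubic_vec None, cubic_vec (Some 0), cubic_vec (Some 1), cubic_vec (Some s)]"
  using assms by (auto simp: cubic_vec_eq_iff)

lemma mem_frame_span_iff:
  assumes "s \<noteq> 0" "s \<noteq> 1"
  shows "w \<in> fq_span q (frame s) \<longleftrightarrow> (\<exists>a\<in>F_q. \<exists>b\<in>F_q. \<exists>c\<in>F_q. \<exists>d\<in>F_q.
    w = (\<lambda>i. a * cubic_vec None i + b * cubic_vec (Some 0) i + c * cubic_vec (Some 1) i
              + d * cubic_vec (Some s) i))"
  unfolding frame_def by (rule fq_span_four[OF frame_distinct[OF assms]])

lemma fq_indep_frame:
  assumes s: "s \<noteq> 0" "s \<noteq> 1"
  shows "fq_indep q (frame s)"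
  unfolding frame_def
proof (rule fq_indep_four[OF frame_distinct[OF s]])
  fix a b c d assume "a \<in> F_q" "b \<in> F_q" "c \<in> F_q" "d \<in> F_q"
    and "\<forall>i. a * cubic_vec None i + b * cubic_vec (Some 0) i + c * cubic_vec (Some 1) i
        + d * cubic_vec (Some s) i = 0"
  then have coords: "b + c + d = 0" "c + d * s = 0" "c + d * (frob s * frob (frob s)) = 0"
      "a + c + d * (s * frob s * frob (frob s)) = 0"
    by (auto dest: spec[of _ 0] spec[of _ 4] spec[of _ 3] spec[of _ 7] simp: cubic_vec_coords)
  have "d = 0"
  proof (rule ccontr)
    assume "d \<noteq> 0"
    then have "s = - c / d"
      using coords(2) by (simp add: field_simps eq_neg_iff_add_eq_0)
    then have "frob s = s"
      using \<open>c \<in> F_q\<close> \<open>d \<in> F_q\<close> by (simp add: Fq_iff)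
    moreover have "d * (s * s - s) = (c + d * (s * s)) - (c + d * s)"
      by (simp add: algebra_simps)
    ultimately have "d * (s * s - s) = 0"
      using coords(2,3) by simp
    then show False
      using \<open>d \<noteq> 0\<close> s by simp
  qed
  then show "a = 0 \<and> b = 0 \<and> c = 0 \<and> d = 0"
    using coords by simp
qed

lemma cubic_vec_mem_frame_span:
  assumes "s \<noteq> 0" "s \<noteq> 1" "cubic_vec (Some t) \<in> fq_span q (frame s)"
  shows "\<exists>c\<in>F_q. \<exists>d\<in>F_q. t = c + d * s \<and> frob t * frob (frob t) = c + d * (frob s * frob (frob s))"
proof -
  obtain a b c d where "a \<in> F_q" "b \<in> F_q" "c \<in> F_q" "d \<in> F_q" and
    t: "cubic_vec (Some t) = (\<lambda>i. a * cubic_vec None i + b * cubic_vec (Some 0) i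
        + c * cubic_vec (Some 1) i + d * cubic_vec (Some s) i)"
    using assms mem_frame_span_iff by blast
  moreover have "t = c + d * s"
    using fun_cong[OF t, of 4] by (simp add: cubic_vec_coords)
  moreover have "frob t * frob (frob t) = c + d * (frob s * frob (frob s))"
    using fun_cong[OF t, of 3] by (simp add: cubic_vec_coords)
  ultimately show ?thesis
    by blast
qed

lemma cubic_vec_mem_frame_span_if_Fq:
  assumes s: "s \<in> F_q" "s \<noteq> 0" "s \<noteq> 1" and t: "t \<in> F_q"
  shows "cubic_vec (Some t) \<in> fq_span q (frame s)"
proof -
  have ss: "s * s - s \<noteq> 0"
    using s by simp
  define d where "d = (t * t - t) / (s * s - s)"
  define c where "c = t - d * s"
  define b where "b = 1 - c - d"
  define a where "a = t * t * t - c - d * (s * s * s)"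
  have "a \<in> F_q" "b \<in> F_q" "c \<in> F_q" "d \<in> F_q"
    unfolding a_def b_def c_def d_def using s t by simp_all
  have "d * (s * s - s) = t * t - t"
    using ss by (simp add: d_def)
  then have coords: "b + c + d = 1" "c + d * s = t" "c + d * (s * s) = t * t"
      "a + c + d * (s * s * s) = t * t * t"
    by (simp_all add: a_def b_def c_def algebra_simps)
  have "frob t = t" "frob s = s"
    using s t by (simp_all add: Fq_iff)
  then have "cubic_vec (Some t) = (\<lambda>i. a * cubic_vec None i + b * cubic_vec (Some 0) i
      + c * cubic_vec (Some 1) i + d * cubic_vec (Some s) i)"
    by (auto simp: cubic_vec_None cubic_vec_Some patch8_def less_8_cases coords fun_eq_iff)
  then show ?thesis
    unfolding mem_frame_span_iff[OF s(2,3)]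
    using \<open>a \<in> F_q\<close> \<open>b \<in> F_q\<close> \<open>c \<in> F_q\<close> \<open>d \<in> F_q\<close> by blast
qed

lemma cubic_vec_mem_frame_span_iff:
  assumes s: "s \<in> F_q" "s \<noteq> 0" "s \<noteq> 1"
  shows "cubic_vec x \<in> fq_span q (frame s) \<longleftrightarrow> x \<in> base_subline q"
proof
  assume x: "cubic_vec x \<in> fq_span q (frame s)"
  show "x \<in> base_subline q"
  proof (cases x)
    case (Some t)
    then obtain c d where "c \<in> F_q" "d \<in> F_q" "t = c + d * s"
      using cubic_vec_mem_frame_span[OF s(2,3)] x by blast
    then show ?thesis
      using Some s by (simp add: base_subline_def)
  qed (simp add: base_subline_def)
next
  assume "x \<in> base_subline q"
  then show "cubic_vec x \<in> fq_span q (frame s)"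
    using cubic_vec_mem_frame_span_if_Fq[OF s]
    by (auto simp: base_subline_def frame_def fq_span_superset)
qed

lemma normal_frame_subspace:
  assumes V: "fq_subspace q V" "finite V" "card V \<le> card F_q ^ 4"
    and frame_V: "frame s \<subseteq> V" and u_V: "cubic_vec (Some u) \<in> V"
    and ne: "s \<noteq> 0" "s \<noteq> 1" "u \<noteq> 0" "u \<noteq> 1" "u \<noteq> s"
  shows "{x. cubic_vec x \<in> V} = base_subline q"
proof -
  have span_sub: "fq_span q (frame s) \<subseteq> V"
    using fq_span_subset_subspace[OF V(1) frame_V] .
  have "card (frame s) = 4"
    using distinct_card[OF frame_distinct[OF ne(1,2)]] by (simp add: frame_def)
  then have "card (fq_span q (frame s)) = card F_q ^ 4"
    using card_fq_span_indep[OF fq_indep_frame[OF ne(1,2)]] by simp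
  then have span_eq: "fq_span q (frame s) = V"
    using card_subset_eq[OF V(2) span_sub] card_mono[OF V(2) span_sub] V(3) by simp
  then obtain c d where "c \<in> F_q" "d \<in> F_q" "u = c + d * s"
      "frob u * frob (frob u) = c + d * (frob s * frob (frob s))"
    using cubic_vec_mem_frame_span[OF ne(1,2)] u_V by blast
  then have "s \<in> F_q"
    using frame_fifth_point_Fq ne by blast
  then show ?thesis
    using cubic_vec_mem_frame_span_iff[OF _ ne(1,2)] span_eq by auto
qed

end

section \<open>Lifting \<open>PGL(2, q^3)\<close> to \<open>PG(U\<^sub>1)\<close>\<close>

context cubic_frobenius
begin

text \<open>Each lift is \<open>M \<otimes> M\<^sup>q \<otimes> M\<^sup>q\<^sup>2\<close> on the first eight coordinates, for a generator \<open>M\<close>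
  of \<open>PGL(2, q\<^sup>3)\<close>: coordinate \<open>4a + 2b + c\<close> (with \<open>a, b, c \<in> {0,1}\<close>)
  of \<open>cubic_vec (Some t)\<close> is \<open>t^a (t^q)^b (t^(q^2))^c\<close>.\<close>

definition inv_lift :: "(nat \<Rightarrow> 'a) \<Rightarrow> nat \<Rightarrow> 'a" where
  "inv_lift w = patch8 [w 7, w 6, w 5, w 4, w 3, w 2, w 1, w 0] w"

definition shift_lift :: "'a \<Rightarrow> (nat \<Rightarrow> 'a) \<Rightarrow> nat \<Rightarrow> 'a" where
  "shift_lift e w = patch8 [w 0, w 1 + frob (frob e) * w 0, w 2 + frob e * w 0,
     w 3 + frob e * w 1 + frob (frob e) * w 2 + frob e * frob (frob e) * w 0,
     w 4 + e * w 0, w 5 + e * w 1 + frob (frob e) * w 4 + e * frob (frob e) * w 0,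
     w 6 + e * w 2 + frob e * w 4 + e * frob e * w 0,
     w 7 + e * w 3 + frob e * w 5 + frob (frob e) * w 6 + e * frob e * w 1 + e * frob (frob e) * w 2
         + frob e * frob (frob e) * w 4 + e * frob e * frob (frob e) * w 0] w"

definition scale_lift :: "'a \<Rightarrow> (nat \<Rightarrow> 'a) \<Rightarrow> nat \<Rightarrow> 'a" where
  "scale_lift r w = patch8 [w 0, frob (frob r) * w 1, frob r * w 2, frob r * frob (frob r) * w 3,
     r * w 4, r * frob (frob r) * w 5, r * frob r * w 6, r * frob r * frob (frob r) * w 7] w"

lemma lin_vec_lifts: "lin_vec inv_lift" "lin_vec (shift_lift e)" "lin_vec (scale_lift r)"
  by (auto simp: lin_vec_def inv_lift_def shift_lift_def scale_lift_def patch8_def less_8_cases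
      fun_eq_iff sum.distrib sum_distrib_left algebra_simps)

lemma inj_lifts: "inj inv_lift" "inj (shift_lift e)" "r \<noteq> 0 \<Longrightarrow> inj (scale_lift r)"
proof -
  show "inj inv_lift"
    by (rule inj_on_inverseI[of _ inv_lift])
      (simp add: inv_lift_def patch8_def less_8_cases fun_eq_iff)
  show "inj (shift_lift e)"
    by (rule inj_on_inverseI[of _ "shift_lift (- e)"])
      (simp add: shift_lift_def patch8_def less_8_cases fun_eq_iff algebra_simps)
  show "r \<noteq> 0 \<Longrightarrow> inj (scale_lift r)"
    by (rule inj_on_inverseI[of _ "scale_lift (1 / r)"])
      (auto simp: scale_lift_def patch8_def less_8_cases fun_eq_iff)
qed

lemma inv_lift_cubic_vec:
  "inv_lift (cubic_vec None) = cubic_vec (Some 0)"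
  "inv_lift (cubic_vec (Some 0)) = cubic_vec None"
  "t \<noteq> 0 \<Longrightarrow> inv_lift (cubic_vec (Some t)) = (\<lambda>i. (t * frob t * frob (frob t)) * cubic_vec (Some (1 / t)) i)"
  by (auto simp: inv_lift_def cubic_vec_None cubic_vec_Some patch8_def less_8_cases fun_eq_iff)

lemma shift_lift_cubic_vec: "shift_lift e (cubic_vec x) = cubic_vec (mobius (shift_mat e) x)"
  by (cases x) (auto simp: shift_lift_def mobius_shift_mat cubic_vec_None cubic_vec_Some patch8_def
      less_8_cases fun_eq_iff algebra_simps)

lemma scale_lift_cubic_vec:
  "scale_lift r (cubic_vec None) = (\<lambda>i. (r * frob r * frob (frob r)) * cubic_vec None i)"
  "scale_lift r (cubic_vec (Some t)) = cubic_vec (Some (r * t))"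
  by (auto simp: scale_lift_def cubic_vec_None cubic_vec_Some patch8_def less_8_cases fun_eq_iff)

definition induces :: "((nat \<Rightarrow> 'a) \<Rightarrow> nat \<Rightarrow> 'a) \<Rightarrow> 'a mat2 \<Rightarrow> bool" where
  "induces P M \<longleftrightarrow> lin_vec P \<and> inj P \<and> mat_det M \<noteq> 0 \<and>
     (\<forall>x. \<exists>l. l \<in> F_q \<and> l \<noteq> 0 \<and> P (cubic_vec x) = (\<lambda>i. l * cubic_vec (mobius M x) i))"

lemma induces_comp:
  assumes P1: "induces P1 M1" and P2: "induces P2 M2"
  shows "induces (P1 \<circ> P2) (mat_mult M1 M2)"
  unfolding induces_def
proof (intro conjI allI)
  show "lin_vec (P1 \<circ> P2)" "inj (P1 \<circ> P2)" "mat_det (mat_mult M1 M2) \<noteq> 0"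
    using assms by (auto simp: induces_def lin_vec_comp inj_compose mat_det_mult)
  fix x
  obtain l2 where l2: "l2 \<in> F_q" "l2 \<noteq> 0" "P2 (cubic_vec x) = (\<lambda>i. l2 * cubic_vec (mobius M2 x) i)"
    using P2 unfolding induces_def by blast
  obtain l1 where l1: "l1 \<in> F_q" "l1 \<noteq> 0"
    "P1 (cubic_vec (mobius M2 x)) = (\<lambda>i. l1 * cubic_vec (mobius M1 (mobius M2 x)) i)"
    using P1 unfolding induces_def by blast
  have "(P1 \<circ> P2) (cubic_vec x) = (\<lambda>i. (l2 * l1) * cubic_vec (mobius (mat_mult M1 M2) x) i)"
    using P1 P2 l1(3) l2(3) by (simp add: induces_def lin_vec_smult mobius_mult mult.assoc)
  then show "\<exists>l. l \<in> F_q \<and> l \<noteq> 0 \<and>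
      (P1 \<circ> P2) (cubic_vec x) = (\<lambda>i. l * cubic_vec (mobius (mat_mult M1 M2) x) i)"
    using l1 l2 by (intro exI[of _ "l2 * l1"]) simp
qed

lemma induces_inv_lift: "induces inv_lift inv_mat"
  unfolding induces_def
proof (intro conjI allI)
  fix x
  show "\<exists>l. l \<in> F_q \<and> l \<noteq> 0 \<and> inv_lift (cubic_vec x) = (\<lambda>i. l * cubic_vec (mobius inv_mat x) i)"
  proof (cases "x = None \<or> x = Some 0")
    case True
    then show ?thesis
      by (intro exI[of _ 1]) (auto simp: inv_lift_cubic_vec mobius_inv_mat)
  next
    case False
    then obtain t where "x = Some t" "t \<noteq> 0"
      by auto
    then show ?thesis
      by (intro exI[of _ "t * frob t * frob (frob t)"]) (simp add: inv_lift_cubic_vec mobius_inv_mat)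
  qed
qed (simp_all add: lin_vec_lifts inj_lifts mat_det_generators)

lemma induces_shift_lift: "induces (shift_lift e) (shift_mat e)"
  unfolding induces_def
  by (intro conjI allI exI[of _ 1]) (simp_all add: lin_vec_lifts inj_lifts mat_det_generators shift_lift_cubic_vec)

lemma induces_scale_lift:
  assumes "r \<noteq> 0"
  shows "induces (scale_lift r) (scale_mat r)"
  unfolding induces_def
proof (intro conjI allI)
  fix x
  show "\<exists>l. l \<in> F_q \<and> l \<noteq> 0 \<and> scale_lift r (cubic_vec x) = (\<lambda>i. l * cubic_vec (mobius (scale_mat r) x) i)"
  proof (cases x)
    case None
    then show ?thesis
      using assms by (intro exI[of _ "r * frob r * frob (frob r)"])
        (simp add: scale_lift_cubic_vec mobius_scale_mat)
  next
    case (Some t)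
    then show ?thesis
      by (intro exI[of _ 1]) (simp add: scale_lift_cubic_vec mobius_scale_mat)
  qed
qed (use assms in \<open>simp_all add: lin_vec_lifts inj_lifts mat_det_generators\<close>)

lemma induces_normalizing_from_infinity:
  assumes "y \<noteq> z" "y \<noteq> None" "z \<noteq> None"
  shows "\<exists>P M. induces P M \<and> mobius M None = None \<and> mobius M y = Some 0 \<and> mobius M z = Some 1"
proof -
  obtain a b where ab: "y = Some a" "z = Some b"
    using assms by auto
  define r where "r = 1 / (b - a)"
  have r: "r \<noteq> 0" "r * (b - a) = 1"
    using assms ab by (simp_all add: r_def)
  let ?M = "mat_mult (scale_mat r) (shift_mat (- a))"
  have "induces (scale_lift r \<circ> shift_lift (- a)) ?M"
    by (rule induces_comp[OF induces_scale_lift[OF r(1)] induces_shift_lift])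
  moreover have "mobius ?M None = None" "mobius ?M y = Some 0" "mobius ?M z = Some 1"
    using r ab by (simp_all add: mobius_mult mat_det_generators mobius_shift_mat mobius_scale_mat
        algebra_simps)
  ultimately show ?thesis
    by blast
qed

lemma induces_normalizing:
  assumes "distinct [x, y, z]"
  shows "\<exists>P M. induces P M \<and> mobius M x = None \<and> mobius M y = Some 0 \<and> mobius M z = Some 1"
proof (cases x)
  case None
  moreover have "y \<noteq> z" "y \<noteq> None" "z \<noteq> None"
    using assms None by (metis distinct_length_2_or_more)+
  ultimately show ?thesis
    using induces_normalizing_from_infinity[of y z] by simp
next
  case (Some a)
  define M0 where "M0 = mat_mult inv_mat (shift_mat (- a))"
  have P0: "induces (inv_lift \<circ> shift_lift (- a)) M0"
    unfolding M0_def by (rule induces_comp[OF induces_inv_lift induces_shift_lift])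
  then have det0: "mat_det M0 \<noteq> 0"
    unfolding induces_def by blast
  have x0: "mobius M0 x = None"
    using Some by (simp add: M0_def mobius_mult mat_det_generators mobius_shift_mat mobius_inv_mat)
  then have "mobius M0 y \<noteq> mobius M0 z" "mobius M0 y \<noteq> None" "mobius M0 z \<noteq> None"
    using assms mobius_eq_iff[OF det0] by (metis distinct_length_2_or_more)+
  then obtain P1 M1 where P1: "induces P1 M1" "mobius M1 None = None"
    "mobius M1 (mobius M0 y) = Some 0" "mobius M1 (mobius M0 z) = Some 1"
    using induces_normalizing_from_infinity by blast
  moreover have "mobius (mat_mult M1 M0) x = None" "mobius (mat_mult M1 M0) y = Some 0"
      "mobius (mat_mult M1 M0) z = Some 1"
    using P1 x0 by (simp_all add: mobius_mult[OF det0])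
  ultimately show ?thesis
    using induces_comp[OF P1(1) P0] by blast
qed

lemma induces_cubic_vec_mem_iff:
  assumes P: "induces P M" and V: "fq_subspace q V"
  shows "cubic_vec x \<in> V \<longleftrightarrow> cubic_vec (mobius M x) \<in> P ` V"
proof -
  obtain l where l: "l \<in> F_q" "l \<noteq> 0" "P (cubic_vec x) = (\<lambda>i. l * cubic_vec (mobius M x) i)"
    using P unfolding induces_def by blast
  have PV: "fq_subspace q (P ` V)"
    using P V by (intro fq_subspace_image) (simp_all add: induces_def)
  have "cubic_vec (mobius M x) = (\<lambda>i. (1 / l) * P (cubic_vec x) i)"
    using l by simp
  then have "cubic_vec (mobius M x) \<in> P ` V \<longleftrightarrow> P (cubic_vec x) \<in> P ` V"
    using l fq_subspace_scale[OF PV, of "cubic_vec (mobius M x)" l]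
      fq_subspace_scale[OF PV, of "P (cubic_vec x)" "1 / l"] by auto
  also have "\<dots> \<longleftrightarrow> cubic_vec x \<in> V"
    using P by (simp add: induces_def inj_image_mem_iff)
  finally show ?thesis ..
qed

end

section \<open>Five points in a solid\<close>

context cubic_frobenius
begin

lemma solid_subspace:
  fixes \<Sigma> :: "(nat \<Rightarrow> 'a) set"
  assumes "is_solid q \<Sigma>"
  shows "fq_subspace q \<Sigma>" "finite \<Sigma>" "card \<Sigma> \<le> card F_q ^ 4"
proof -
  obtain S :: "(nat \<Rightarrow> 'a) set" where S: "card S = 4" "\<Sigma> = fq_span q S"
    using assms unfolding is_solid_def by blast
  then have "finite S"
    by (simp add: card_ge_0_finite)
  then show "fq_subspace q \<Sigma>" "finite \<Sigma>" "card \<Sigma> \<le> card F_q ^ 4"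
    using S fq_subspace_fq_span[of S] card_fq_span_le[of S] by simp_all
qed

lemma subspace_through_five_points:
  assumes \<Sigma>: "fq_subspace q \<Sigma>" "finite \<Sigma>" "card \<Sigma> \<le> card F_q ^ 4"
    and Y: "card Y = 5" "\<forall>x\<in>Y. cubic_vec x \<in> \<Sigma>"
  shows "\<exists>M. mat_det M \<noteq> 0 \<and> {x. cubic_vec x \<in> \<Sigma>} = mobius M ` base_subline q"
proof -
  obtain xs where xs: "set xs = Y" "distinct xs"
    using finite_distinct_list card_ge_0_finite Y(1) by (metis zero_less_numeral)
  then have "length xs = 5"
    using Y(1) distinct_card by fastforce
  then obtain x1 x2 x3 x4 x5 where xs5: "xs = [x1, x2, x3, x4, x5]"
    by (auto simp: numeral_eq_Suc length_Suc_conv)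
  obtain P G where G: "induces P G" "mobius G x1 = None" "mobius G x2 = Some 0" "mobius G x3 = Some 1"
    using induces_normalizing[of x1 x2 x3] xs(2) xs5 by auto
  then have det: "mat_det G \<noteq> 0"
    by (simp add: induces_def)
  have V: "fq_subspace q (P ` \<Sigma>)" "finite (P ` \<Sigma>)" "card (P ` \<Sigma>) \<le> card F_q ^ 4"
    using G(1) \<Sigma> card_image_le[OF \<Sigma>(2), of P] by (auto simp: induces_def intro: fq_subspace_image)
  have mem: "cubic_vec x \<in> \<Sigma> \<longleftrightarrow> cubic_vec (mobius G x) \<in> P ` \<Sigma>" for x
    using induces_cubic_vec_mem_iff[OF G(1) \<Sigma>(1)] .
  have dist: "distinct (map (mobius G) [x1, x2, x3, x4, x5])"
    using xs(2) xs5 mobius_eq_iff[OF det] by (auto simp: distinct_map inj_on_def)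
  then obtain s u where su: "mobius G x4 = Some s" "mobius G x5 = Some u"
    using G(2) by (cases "mobius G x4"; cases "mobius G x5") auto
  have "{y. cubic_vec y \<in> P ` \<Sigma>} = base_subline q"
  proof (rule normal_frame_subspace[OF V])
    show "frame s \<subseteq> P ` \<Sigma>" "cubic_vec (Some u) \<in> P ` \<Sigma>"
      using Y(2) xs(1) xs5 mem G su by (auto simp: frame_def)
    show "s \<noteq> 0" "s \<noteq> 1" "u \<noteq> 0" "u \<noteq> 1" "u \<noteq> s"
      using dist G su by auto
  qed
  then have "{x. cubic_vec x \<in> \<Sigma>} = {x. mobius G x \<in> base_subline q}"
    using mem by blast
  also have "\<dots> = mobius (mat_adj G) ` base_subline q"
    using det by (auto intro!: image_eqI[of _ "mobius (mat_adj G)" "mobius G _"])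
  finally show ?thesis
    using det by (intro exI[of _ "mat_adj G"]) simp
qed

lemma twisted_cubic_O1_mobius_image:
  assumes "mat_det M \<noteq> 0"
  shows "twisted_cubic_O1 q (cubic_point ` mobius M ` base_subline q)"
proof (cases M)
  case (fields \<alpha> \<beta> \<gamma> \<delta>)
  have "theta q (\<alpha> + \<beta> * t, \<gamma> + \<delta> * t) = cubic_point (mobius M (Some t))"
    "theta q (\<beta>, \<delta>) = cubic_point (mobius M None)" for t
    by (simp_all add: theta_eq_cubic_point mobius_def fields mat_act_def proj_rep_def)
  then have "cubic_point ` mobius M ` base_subline q
      = {theta q (\<alpha> + \<beta> * t, \<gamma> + \<delta> * t) | t. t \<in> Fq q} \<union> {theta q (\<beta>, \<delta>)}"
    by (auto simp: base_subline_def)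
  then show ?thesis
    using assms unfolding twisted_cubic_O1_def
    by (intro exI[of _ \<alpha>] exI[of _ \<beta>] exI[of _ \<gamma>] exI[of _ \<delta>]) (simp add: fields mat_det_def)
qed

end

theorem mainTheorem3:
  fixes q :: nat and \<Sigma> :: "(nat \<Rightarrow> 'a::{field,finite}) set"
    and X :: "((nat \<Rightarrow> 'a) set) set"
  assumes "\<exists>p k. prime p \<and> k > 0 \<and> q = p ^ k"
    and "card (UNIV :: 'a set) = q ^ 3"
    and "q \<ge> 4"
    and "is_solid q \<Sigma>"
    and "X \<subseteq> O1 q" and "card X = 5"
    and "\<forall>P\<in>X. P \<subseteq> \<Sigma>"
  shows "\<exists>C. twisted_cubic_O1 q C \<and> X \<subseteq> C \<and> C = {P \<in> O1 q. P \<subseteq> \<Sigma>}"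
proof -
  interpret cubic_frobenius "TYPE('a)" q
    using assms(1,2) by (rule cubic_frobeniusI)
  note \<Sigma> = solid_subspace[OF assms(4)]
  define Y where "Y = {x. cubic_point x \<in> X}"
  have "X = cubic_point ` Y"
    using assms(5) by (auto simp: Y_def O1_eq_range_cubic_point)
  then have "card Y = 5"
    using assms(6) card_image[OF inj_on_subset[OF inj_cubic_point]] by auto
  moreover have "\<forall>x\<in>Y. cubic_vec x \<in> \<Sigma>"
    using assms(7) cubic_point_subset_iff[OF \<Sigma>(1)] by (auto simp: Y_def)
  ultimately obtain M where M: "mat_det M \<noteq> 0" "{x. cubic_vec x \<in> \<Sigma>} = mobius M ` base_subline q"
    using subspace_through_five_points[OF \<Sigma>] by blast
  define C where "C = cubic_point ` mobius M ` base_subline q"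
  have "C = {P \<in> O1 q. P \<subseteq> \<Sigma>}"
    unfolding C_def M(2)[symmetric] O1_eq_range_cubic_point
    using cubic_point_subset_iff[OF \<Sigma>(1)] by auto
  moreover have "twisted_cubic_O1 q C"
    unfolding C_def by (rule twisted_cubic_O1_mobius_image[OF M(1)])
  ultimately show ?thesis
    using assms(5,7) by blast
qed

end
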